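(* Let $\mathcal{G}=(\mathcal{V}_x,\mathcal{E}_x)$ be a finite simple undirected graph with edge probabilities $p:\mathcal{E}_x\to[0,1]$, and let $k\ge 1$ be an integer. Let $f:2^{\mathcal{E}_x}\to\mathbb{R}_{\ge0}$ be the modular function $f(\mathcal{E})=\sum_{e\in\mathcal{E}}p(e)$. Define $g:2^{\mathcal{V}_x}\to\mathbb{R}_{\ge 0}$ by $g(\varnothing)=0$ and, for $\mathcal{V}\subseteq\mathcal{V}_x$, $$g(\mathcal{V})=\max\Big\{\textstyle\sum_{e\in\mathcal{E}}p(e)\;:\;\mathcal{E}\subseteq \mathsf{edges}(\mathcal{V}),\ |\mathcal{E}|\le k\Big\}$$ (i.e., the sum of the $k$ largest edge probabilities in $\mathsf{edges}(\mathcal{V})$, or the sum over all of $\mathsf{edges}(\mathcal{V})$ if it has at most $k$ edges). Then $g$ is normalized, monotone, and submodular.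
   Context: For $\mathcal{V}\subseteq\mathcal{V}_x$, $\mathsf{edges}(\mathcal{V})$ denotes the set of all edges of $\mathcal{G}$ incident to at least one vertex in $\mathcal{V}$. A set function $h:2^{W}\to\mathbb{R}_{\ge0}$ on a finite set $W$ is normalized if $h(\varnothing)=0$, monotone if $h(A)\le h(B)$ whenever $A\subseteq B$, and submodular if $h(A)+h(B)\ge h(A\cup B)+h(A\cap B)$ for all $A,B\subseteq W$. *)

theory Defs
  imports Complex_Main
begin

definition simple_graph :: "'a set \<Rightarrow> 'a set set \<Rightarrow> bool" where
  "simple_graph Vx Es \<longleftrightarrow> finite Vx \<and> (\<forall>e\<in>Es. e \<subseteq> Vx \<and> card e = 2)"

definition edges_of :: "'a set set \<Rightarrow> 'a set \<Rightarrow> 'a set set" where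
  "edges_of Es V = {e \<in> Es. e \<inter> V \<noteq> {}}"

definition topk_fun :: "'a set set \<Rightarrow> ('a set \<Rightarrow> real) \<Rightarrow> nat \<Rightarrow> 'a set \<Rightarrow> real" where
  "topk_fun Es p k V =
     (if V = {} then 0
      else Max {(\<Sum>e\<in>F. p e) | F. F \<subseteq> edges_of Es V \<and> card F \<le> k})"

definition set_fun_nonneg :: "'b set \<Rightarrow> ('b set \<Rightarrow> real) \<Rightarrow> bool" where
  "set_fun_nonneg W h \<longleftrightarrow> (\<forall>A. A \<subseteq> W \<longrightarrow> 0 \<le> h A)"

definition set_fun_normalized :: "('b set \<Rightarrow> real) \<Rightarrow> bool" where
  "set_fun_normalized h \<longleftrightarrow> h {} = 0"

definition set_fun_monotone :: "'b set \<Rightarrow> ('b set \<Rightarrow> real) \<Rightarrow> bool" where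
  "set_fun_monotone W h \<longleftrightarrow> (\<forall>A B. A \<subseteq> B \<and> B \<subseteq> W \<longrightarrow> h A \<le> h B)"

definition set_fun_submodular :: "'b set \<Rightarrow> ('b set \<Rightarrow> real) \<Rightarrow> bool" where
  "set_fun_submodular W h \<longleftrightarrow>
     (\<forall>A B. A \<subseteq> W \<and> B \<subseteq> W \<longrightarrow> h A + h B \<ge> h (A \<union> B) + h (A \<inter> B))"

end

theory Submission
  imports Defs
begin

text \<open>
  g is the composition of the coverage map V \<mapsto> edges(V), which sends unions to unions and
  intersections into intersections, with the top-k weight E \<mapsto> max{w(F) : F \<subseteq> E, |F| \<le> k}.
  The latter is submodular by an exchange argument: optimal sets A for S \<union> T and B for S \<inter> T
  can be redistributed into G \<subseteq> S and H \<subseteq> T of size at most k with G \<union> H = A \<union> B and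
  G \<inter> H = A \<inter> B, so w(A) + w(B) = w(G) + w(H).
\<close>

definition top_k_weight :: "('a \<Rightarrow> real) \<Rightarrow> nat \<Rightarrow> 'a set \<Rightarrow> real" where
  "top_k_weight w k E = Max {(\<Sum>e\<in>F. w e) | F. F \<subseteq> E \<and> card F \<le> k}"

lemma finite_bounded_subset_sums:
  assumes "finite E"
  shows "finite {(\<Sum>e\<in>F. w e) | F. F \<subseteq> E \<and> card F \<le> k}"
proof -
  have "{(\<Sum>e\<in>F. w e) | F. F \<subseteq> E \<and> card F \<le> k} \<subseteq> (\<lambda>F. \<Sum>e\<in>F. w e) ` Pow E"
    by auto
  then show ?thesis
    using assms by (meson finite_Pow_iff finite_imageI finite_subset)
qed

lemma sum_le_top_k_weight:
  assumes "finite E" "F \<subseteq> E" "card F \<le> k"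
  shows "(\<Sum>e\<in>F. w e) \<le> top_k_weight w k E"
  unfolding top_k_weight_def
  using assms finite_bounded_subset_sums[OF assms(1)] by (intro Max_ge) auto

lemma top_k_weight_attained:
  assumes "finite E"
  obtains F where "F \<subseteq> E" "card F \<le> k" "top_k_weight w k E = (\<Sum>e\<in>F. w e)"
proof -
  have "{(\<Sum>e\<in>F. w e) | F. F \<subseteq> E \<and> card F \<le> k} \<noteq> {}"
    by auto
  then have "top_k_weight w k E \<in> {(\<Sum>e\<in>F. w e) | F. F \<subseteq> E \<and> card F \<le> k}"
    unfolding top_k_weight_def by (rule Max_in[OF finite_bounded_subset_sums[OF assms]])
  then show ?thesis
    using that by auto
qed

lemma top_k_weight_nonneg:
  assumes "finite E"
  shows "0 \<le> top_k_weight w k E"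
  using sum_le_top_k_weight[OF assms, of "{}" k w] by simp

lemma top_k_weight_empty [simp]: "top_k_weight w k {} = 0"
  by (metis top_k_weight_attained finite.emptyI subset_empty sum.empty)

lemma top_k_weight_mono:
  assumes "finite E'" "E \<subseteq> E'"
  shows "top_k_weight w k E \<le> top_k_weight w k E'"
proof -
  obtain F where "F \<subseteq> E" "card F \<le> k" "top_k_weight w k E = (\<Sum>e\<in>F. w e)"
    using top_k_weight_attained[of E] assms finite_subset by metis
  then show ?thesis
    using sum_le_top_k_weight[OF assms(1), of F k w] assms(2) by auto
qed

lemma bounded_subsets_exchange:
  assumes "finite A" "finite B"
    and A: "A \<subseteq> S \<union> T" "card A \<le> k"
    and B: "B \<subseteq> S \<inter> T" "card B \<le> k"
  obtains G H where "G \<subseteq> S" "H \<subseteq> T" "card G \<le> k" "card H \<le> k"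
    "G \<union> H = A \<union> B" "G \<inter> H = A \<inter> B"
proof -
  define H0 where "H0 = (A - S) \<union> (A \<inter> B)"
  define Fr where "Fr = (A \<inter> S \<inter> T - B) \<union> (B - A)"
  have "finite H0" "finite Fr"
    unfolding H0_def Fr_def using assms by simp_all
  have "card H0 \<le> k"
    using card_mono[OF \<open>finite A\<close>, of H0] A unfolding H0_def by auto
  \<comment> \<open>H takes as much of the free part Fr as fits into k elements; G gets the rest.\<close>
  obtain Y where Y: "Y \<subseteq> Fr" "card H0 + card Y \<le> k"
    and Y_cases: "Y = Fr \<or> card H0 + card Y = k"
  proof (cases "card Fr \<le> k - card H0")
    case True
    then show ?thesis
      using that[of Fr] \<open>card H0 \<le> k\<close> by simp
  next
    case False
    then obtain Y where "Y \<subseteq> Fr" "card Y = k - card H0"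
      using obtain_subset_with_card_n[of "k - card H0" Fr] by auto
    then show ?thesis
      using that[of Y] \<open>card H0 \<le> k\<close> by simp
  qed
  define H where "H = H0 \<union> Y"
  define G where "G = (A \<union> B - H) \<union> (A \<inter> B)"
  have "finite Y"
    using Y(1) \<open>finite Fr\<close> finite_subset by blast
  have card_H: "card H = card H0 + card Y"
    unfolding H_def using Y(1)
    by (intro card_Un_disjoint \<open>finite H0\<close> \<open>finite Y\<close>) (auto simp: H0_def Fr_def)
  have G_H_Un: "G \<union> H = A \<union> B" and G_H_Int: "G \<inter> H = A \<inter> B"
    using Y(1) unfolding G_def H_def H0_def Fr_def by auto
  have "card G + card H = card A + card B"
    using card_Un_Int[OF \<open>finite A\<close> \<open>finite B\<close>] card_Un_Int[of G H] G_H_Un G_H_Int assms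
    by (metis finite_Un)
  moreover have "card G \<le> card A" if "Y = Fr"
    using \<open>finite A\<close> that by (intro card_mono) (auto simp: G_def H_def H0_def Fr_def)
  ultimately have "card G \<le> k"
    using Y_cases card_H A(2) B(2) by linarith
  moreover have "G \<subseteq> S" "H \<subseteq> T"
    using A(1) B(1) Y(1) unfolding G_def H_def H0_def Fr_def by auto
  ultimately show ?thesis
    using that G_H_Un G_H_Int card_H Y(2) by simp
qed

lemma top_k_weight_submodular:
  assumes "finite S" "finite T"
  shows "top_k_weight w k (S \<union> T) + top_k_weight w k (S \<inter> T)
         \<le> top_k_weight w k S + top_k_weight w k T"
proof -
  obtain A where A: "A \<subseteq> S \<union> T" "card A \<le> k" "top_k_weight w k (S \<union> T) = (\<Sum>e\<in>A. w e)"
    using top_k_weight_attained[of "S \<union> T"] assms by blast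
  obtain B where B: "B \<subseteq> S \<inter> T" "card B \<le> k" "top_k_weight w k (S \<inter> T) = (\<Sum>e\<in>B. w e)"
    using top_k_weight_attained[of "S \<inter> T"] assms by blast
  have "finite A" "finite B"
    using A(1) B(1) assms finite_subset by blast+
  then obtain G H where GH: "G \<subseteq> S" "H \<subseteq> T" "card G \<le> k" "card H \<le> k"
    "G \<union> H = A \<union> B" "G \<inter> H = A \<inter> B"
    using bounded_subsets_exchange A B by metis
  have "finite G" "finite H"
    using GH(1,2) assms finite_subset by blast+
  have "(\<Sum>e\<in>A. w e) + (\<Sum>e\<in>B. w e) = (\<Sum>e\<in>G. w e) + (\<Sum>e\<in>H. w e)"
    using sum.union_inter[OF \<open>finite A\<close> \<open>finite B\<close>] sum.union_inter[OF \<open>finite G\<close> \<open>finite H\<close>] GH(5,6)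
    by metis
  also have "\<dots> \<le> top_k_weight w k S + top_k_weight w k T"
    using sum_le_top_k_weight[OF \<open>finite S\<close> GH(1,3), where w=w]
      sum_le_top_k_weight[OF \<open>finite T\<close> GH(2,4), where w=w]
    by simp
  finally show ?thesis
    using A(3) B(3) by simp
qed

lemma finite_edges_of:
  assumes "simple_graph Vx Es"
  shows "finite (edges_of Es V)"
proof -
  have "Es \<subseteq> Pow Vx" "finite Vx"
    using assms unfolding simple_graph_def by auto
  then show ?thesis
    unfolding edges_of_def by (simp add: finite_subset)
qed

lemma edges_of_Un: "edges_of Es (A \<union> B) = edges_of Es A \<union> edges_of Es B"
  unfolding edges_of_def by auto

lemma edges_of_Int_subset: "edges_of Es (A \<inter> B) \<subseteq> edges_of Es A \<inter> edges_of Es B"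
  unfolding edges_of_def by auto

lemma edges_of_mono: "A \<subseteq> B \<Longrightarrow> edges_of Es A \<subseteq> edges_of Es B"
  unfolding edges_of_def by auto

lemma topk_fun_eq_top_k_weight: "topk_fun Es p k V = top_k_weight p k (edges_of Es V)"
  unfolding topk_fun_def top_k_weight_def[symmetric] by (simp add: edges_of_def)

theorem theorem1:
  fixes Vx :: "'a set" and Es :: "'a set set" and p :: "'a set \<Rightarrow> real" and k :: nat
  assumes "simple_graph Vx Es"
    and "\<forall>e\<in>Es. 0 \<le> p e \<and> p e \<le> 1"
    and "k \<ge> 1"
  shows "set_fun_nonneg Vx (topk_fun Es p k)
       \<and> set_fun_normalized (topk_fun Es p k)
       \<and> set_fun_monotone Vx (topk_fun Es p k)
       \<and> set_fun_submodular Vx (topk_fun Es p k)"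
proof -
  note fin = finite_edges_of[OF assms(1)]
  have "top_k_weight p k (edges_of Es (A \<union> B)) + top_k_weight p k (edges_of Es (A \<inter> B))
        \<le> top_k_weight p k (edges_of Es A) + top_k_weight p k (edges_of Es B)" for A B
  proof -
    have "top_k_weight p k (edges_of Es (A \<inter> B))
          \<le> top_k_weight p k (edges_of Es A \<inter> edges_of Es B)"
      using fin by (intro top_k_weight_mono edges_of_Int_subset) auto
    then show ?thesis
      using top_k_weight_submodular[OF fin[of A] fin[of B], of p k] unfolding edges_of_Un by linarith
  qed
  then show ?thesis
    unfolding set_fun_nonneg_def set_fun_normalized_def set_fun_monotone_def
      set_fun_submodular_def topk_fun_eq_top_k_weight
    using top_k_weight_nonneg[OF fin] top_k_weight_mono[OF fin edges_of_mono]
    by (auto simp: edges_of_def add.commute)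
qed

end
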